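(* Let $H$ be a fixed hypergraph on $m$ vertices $\{1,\dots,m\}$ and $s_1,\dots,s_m$ positive integers, and let $\delta=\frac{\max\{s_i:1\le i\le m\}}{\prod_{i=1}^m s_i}$. Then for sufficiently large $n$, every hypergraph $G$ on $n$ vertices with $R(G)=R(H)$ that contains no subgraph $H(s_1,\dots,s_m)$ satisfies $\mu_H(G)=O(n^{-\delta})$ (the implied constant depending only on $H$ and $s_1,\dots,s_m$).
   Context: A hypergraph $H=(V,E)$ has finite vertex set $V$ and edge set $E\subseteq 2^V$; $R(H)=\{|F|:F\in E\}$. $H_1\subseteq H_2$ (subgraph) means there is an injective $f\colon V(H_1)\to V(H_2)$ with $f(F)\in E(H_2)$ for all $F\in E(H_1)$. The density $\mu_H(G)$ of $H$ in $G$ (with $R(H)=R(G)$) is the probability that a uniformly random injective map $f\colon V(H)\to V(G)$ satisfies $f(F)\in E(G)$ for all $F\in E(H)$. The blowup $H(s_1,\dots,s_m)$ has vertex set $V_1\sqcup\dots\sqcup V_m$, $|V_i|=s_i$, and edge set $\bigcup_{F\in E(H)}\prod_{i\in F}V_i$. *)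

theory Defs
  imports Complex_Main "HOL-Library.FuncSet"
begin

definition is_hypergraph :: "'a set \<Rightarrow> 'a set set \<Rightarrow> bool" where
  "is_hypergraph V E \<longleftrightarrow> finite V \<and> E \<subseteq> Pow V"

definition edge_sizes :: "'a set set \<Rightarrow> nat set" where
  "edge_sizes E = card ` E"

definition sub_hg :: "'a set \<Rightarrow> 'a set set \<Rightarrow> 'b set \<Rightarrow> 'b set set \<Rightarrow> bool" where
  "sub_hg V1 E1 V2 E2 \<longleftrightarrow>
     (\<exists>f. inj_on f V1 \<and> f ` V1 \<subseteq> V2 \<and> (\<forall>F\<in>E1. f ` F \<in> E2))"

text \<open>Injective maps V1 to V2 (as extensional functions, so they are counted once each).\<close>
definition inj_maps :: "'a set \<Rightarrow> 'b set \<Rightarrow> ('a \<Rightarrow> 'b) set" where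
  "inj_maps V1 V2 = {f \<in> V1 \<rightarrow>\<^sub>E V2. inj_on f V1}"

definition hg_density :: "'a set \<Rightarrow> 'a set set \<Rightarrow> 'b set \<Rightarrow> 'b set set \<Rightarrow> real" where
  "hg_density V1 E1 V2 E2 =
     real (card {f \<in> inj_maps V1 V2. \<forall>F\<in>E1. f ` F \<in> E2}) / real (card (inj_maps V1 V2))"

text \<open>Blowup H(s_0,...,s_{m-1}) of H on vertex set {0..<m}: V_i = {i} x {0..<s i}.\<close>
definition blowup_V :: "nat \<Rightarrow> (nat \<Rightarrow> nat) \<Rightarrow> (nat \<times> nat) set" where
  "blowup_V m s = {(i, j). i < m \<and> j < s i}"

definition blowup_E :: "nat set set \<Rightarrow> (nat \<Rightarrow> nat) \<Rightarrow> (nat \<times> nat) set set" where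
  "blowup_E E s = {(\<lambda>i. (i, g i)) ` F | F g. F \<in> E \<and> (\<forall>i\<in>F. g i < s i)}"

end

theory Submission
  imports Defs "HOL-Analysis.Convex"
begin

text \<open>Let \<open>t\<close> be the density of all, not necessarily injective, homomorphisms of \<open>H\<close> into \<open>G\<close>.
  Jensen's inequality, applied one vertex class at a time, shows that a blowup \<open>H(s')\<close> has
  homomorphism density at least \<open>t ^ P\<close> with \<open>P = \<Prod>i. s' i\<close>. Choose \<open>s'\<close> equal to \<open>s\<close> except that a
  largest class \<open>k\<close> is shrunk to a single vertex, so that \<open>1 / P = \<delta>\<close>. If \<open>G\<close> contains no
  \<open>H(s)\<close>, an injective choice of the other classes has fewer than \<open>s k + \<Sum>i\<noteq>k. s i\<close> extensions to
  class \<open>k\<close>, since \<open>s k\<close> of them avoiding the chosen vertices would complete a copy of \<open>H(s)\<close>;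
  non-injective choices form a fraction \<open>O(1/n)\<close>. Hence \<open>t ^ P = O(1/n)\<close>, i.e. \<open>t = O(n powr -\<delta>)\<close>,
  and for \<open>n \<ge> 2m\<close> the injective maps form at least a fraction \<open>2 ^ -m\<close> of all maps.\<close>

lemma convex_on_nonneg_power: "convex_on {0::real..} (\<lambda>x. x ^ k)"
proof (cases "even k")
  case True
  then show ?thesis
    by (rule convex_on_subset[OF convex_power_even]) auto
qed (rule convex_power_odd)

lemma power_mean_le_mean_power:
  fixes f :: "'a \<Rightarrow> real"
  assumes "finite A" "A \<noteq> {}" "\<And>x. x \<in> A \<Longrightarrow> 0 \<le> f x"
  shows "((\<Sum>x\<in>A. f x) / card A) ^ k \<le> (\<Sum>x\<in>A. f x ^ k) / card A"
proof -
  have "(\<Sum>x\<in>A. 1 / real (card A)) = 1"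
    using assms(1,2) by simp
  from convex_on_sum[OF assms(1,2) convex_on_nonneg_power this, of f] assms(3)
  show ?thesis
    by (simp add: sum_divide_distrib[symmetric] sum_distrib_left[symmetric] field_simps)
qed

lemma sum_PiE_insert:
  fixes h :: "('i \<Rightarrow> 'c) \<Rightarrow> 'a::comm_monoid_add"
  assumes "finite I" "a \<notin> I" "\<And>i. i \<in> insert a I \<Longrightarrow> finite (T i)"
  shows "(\<Sum>y\<in>PiE (insert a I) T. h y) = (\<Sum>z\<in>T a. \<Sum>y\<in>PiE I T. h (y(a := z)))"
proof -
  have "(\<Sum>y\<in>PiE (insert a I) T. h y) = (\<Sum>(z, y)\<in>T a \<times> PiE I T. h (y(a := z)))"
    by (subst PiE_insert_eq, subst sum.reindex[OF inj_combinator[OF assms(2)]])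
      (simp add: o_def case_prod_unfold)
  also have "\<dots> = (\<Sum>z\<in>T a. \<Sum>y\<in>PiE I T. h (y(a := z)))"
    by (simp add: sum.cartesian_product)
  finally show ?thesis .
qed

lemma of_bool_Ball_eq_prod:
  "finite A \<Longrightarrow> (of_bool (\<forall>x\<in>A. P x) :: 'a::comm_semiring_1) = (\<Prod>x\<in>A. of_bool (P x))"
  by (cases "\<forall>x\<in>A. P x") (auto intro!: prod_zero)

definition map_density :: "'b set \<Rightarrow> 'i set \<Rightarrow> (('i \<Rightarrow> 'b) \<Rightarrow> bool) \<Rightarrow> real" where
  "map_density V I \<Phi> = (\<Sum>x\<in>I \<rightarrow>\<^sub>E V. of_bool (\<Phi> x)) / real (card V) ^ card I"

text \<open>A point of the blowup space picks \<open>s i\<close> vertices \<open>y i j\<close> for every index \<open>i\<close>; it counts when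
  every choice of one of these vertices per index satisfies \<open>\<Phi>\<close>.\<close>
definition blowup_density ::
    "'b set \<Rightarrow> 'i set \<Rightarrow> ('i \<Rightarrow> nat) \<Rightarrow> (('i \<Rightarrow> 'b) \<Rightarrow> bool) \<Rightarrow> real" where
  "blowup_density V I s \<Phi> =
     (\<Sum>y\<in>PiE I (\<lambda>i. {..<s i} \<rightarrow>\<^sub>E V).
        of_bool (\<forall>g\<in>PiE I (\<lambda>i. {..<s i}). \<Phi> (\<lambda>i\<in>I. y i (g i))))
     / real (card V) ^ (\<Sum>i\<in>I. s i)"

lemma blowup_density_cong:
  assumes "\<And>i. i \<in> I \<Longrightarrow> s i = s' i"
  shows "blowup_density V I s \<Phi> = blowup_density V I s' \<Phi>"
proof -
  have "PiE I (\<lambda>i. {..<s i} \<rightarrow>\<^sub>E V) = PiE I (\<lambda>i. {..<s' i} \<rightarrow>\<^sub>E V)"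
    "PiE I (\<lambda>i. {..<s i}) = PiE I (\<lambda>i. {..<s' i})" "(\<Sum>i\<in>I. s i) = (\<Sum>i\<in>I. s' i)"
    using assms by (auto intro!: PiE_cong sum.cong)
  then show ?thesis
    by (simp add: blowup_density_def)
qed

lemma map_density_nonneg: "0 \<le> map_density V I \<Phi>"
  by (simp add: map_density_def sum_nonneg)

lemma map_density_insert_power_le:
  assumes "finite I" "a \<notin> I" "finite V" "V \<noteq> {}"
  shows "map_density V (insert a I) \<Phi> ^ r
    \<le> (\<Sum>z\<in>{..<r} \<rightarrow>\<^sub>E V. map_density V I (\<lambda>x. \<forall>j<r. \<Phi> (x(a := z j)))) / real (card V) ^ r"
proof -
  define n where "n = real (card V)"
  define X where "X = I \<rightarrow>\<^sub>E V"
  define d where "d x = (\<Sum>w\<in>V. of_bool (\<Phi> (x(a := w))) :: real)" for x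
  have n: "n > 0" using assms(3,4) by (simp add: n_def card_gt_0_iff)
  have X: "finite X" "X \<noteq> {}" "real (card X) = n ^ card I"
    using assms by (simp_all add: X_def n_def finite_PiE card_funcsetE PiE_eq_empty_iff)
  have "(\<Sum>y\<in>insert a I \<rightarrow>\<^sub>E V. of_bool (\<Phi> y)) = (\<Sum>x\<in>X. d x)"
    unfolding X_def d_def by (subst sum_PiE_insert) (rule sum.swap | simp add: assms)+
  then have "map_density V (insert a I) \<Phi> = (\<Sum>x\<in>X. d x / n) / card X"
    using assms X(3) by (simp add: map_density_def sum_divide_distrib[symmetric] n_def)
  also have "\<dots> ^ r \<le> (\<Sum>x\<in>X. (d x / n) ^ r) / card X"
    using X n by (intro power_mean_le_mean_power) (auto simp: d_def sum_nonneg)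
  also have "\<dots> = (\<Sum>x\<in>X. \<Prod>j<r. d x) / (n ^ card I * n ^ r)"
    by (simp add: X(3) power_divide sum_divide_distrib mult.commute)
  also have "\<dots> = (\<Sum>x\<in>X. \<Sum>z\<in>{..<r} \<rightarrow>\<^sub>E V. of_bool (\<forall>j\<in>{..<r}. \<Phi> (x(a := z j))))
      / (n ^ card I * n ^ r)"
    unfolding d_def using assms(3)
    by (simp only: prod_sum_PiE of_bool_Ball_eq_prod finite_lessThan)
  also have "\<dots> = (\<Sum>z\<in>{..<r} \<rightarrow>\<^sub>E V. map_density V I (\<lambda>x. \<forall>j<r. \<Phi> (x(a := z j)))) / n ^ r"
    unfolding X_def by (subst sum.swap) (simp add: map_density_def sum_divide_distrib[symmetric] n_def Ball_def)
  finally show ?thesis by (simp add: n_def)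
qed

lemma blowup_density_insert:
  assumes "finite I" "a \<notin> I" "finite V"
  shows "blowup_density V (insert a I) s \<Phi>
    = (\<Sum>z\<in>{..<s a} \<rightarrow>\<^sub>E V. blowup_density V I s (\<lambda>x. \<forall>j<s a. \<Phi> (x(a := z j))))
      / real (card V) ^ s a"
proof -
  have restrict_upd: "(\<lambda>i\<in>insert a I. (y(a := z)) i ((g(a := j)) i)) = (\<lambda>i\<in>I. y i (g i))(a := z j)"
    for y z g j using assms(2) by (intro ext) auto
  have "(\<forall>g\<in>PiE (insert a I) (\<lambda>i. {..<s i}). \<Phi> (\<lambda>i\<in>insert a I. (y(a := z)) i (g i)))
      \<longleftrightarrow> (\<forall>g\<in>PiE I (\<lambda>i. {..<s i}). \<forall>j<s a. \<Phi> ((\<lambda>i\<in>I. y i (g i))(a := z j)))" for y z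
  proof -
    have "(\<forall>g\<in>PiE (insert a I) (\<lambda>i. {..<s i}). Q g)
        \<longleftrightarrow> (\<forall>j<s a. \<forall>g\<in>PiE I (\<lambda>i. {..<s i}). Q (g(a := j)))" for Q
      by (subst PiE_insert_eq) auto
    then show ?thesis
      by (simp only: restrict_upd) blast
  qed
  then have "(\<Sum>y\<in>PiE (insert a I) (\<lambda>i. {..<s i} \<rightarrow>\<^sub>E V).
        of_bool (\<forall>g\<in>PiE (insert a I) (\<lambda>i. {..<s i}). \<Phi> (\<lambda>i\<in>insert a I. y i (g i))))
      = (\<Sum>z\<in>{..<s a} \<rightarrow>\<^sub>E V. \<Sum>y\<in>PiE I (\<lambda>i. {..<s i} \<rightarrow>\<^sub>E V).
        of_bool (\<forall>g\<in>PiE I (\<lambda>i. {..<s i}). \<forall>j<s a. \<Phi> ((\<lambda>i\<in>I. y i (g i))(a := z j))) :: real)"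
    using assms by (subst sum_PiE_insert) (auto simp: finite_PiE)
  then show ?thesis
    using assms by (simp add: blowup_density_def power_add sum_divide_distrib[symmetric]
        divide_divide_eq_left mult.commute)
qed

lemma map_density_power_le_blowup_density:
  assumes "finite I" "finite V" "V \<noteq> {}" "\<forall>i\<in>I. 0 < s i"
  shows "map_density V I \<Phi> ^ (\<Prod>i\<in>I. s i) \<le> blowup_density V I s \<Phi>"
  using assms(1,4)
proof (induction I arbitrary: \<Phi> rule: finite_induct)
  case empty
  then show ?case
    by (simp add: map_density_def blowup_density_def)
next
  case (insert a I)
  define Z where "Z = {..<s a} \<rightarrow>\<^sub>E V"
  define \<Psi> where "\<Psi> = (\<lambda>z x. \<forall>j<s a. \<Phi> (x(a := z j)))"
  have Z: "finite Z" "Z \<noteq> {}" "real (card Z) = real (card V) ^ s a"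
    using assms(2,3) by (simp_all add: Z_def finite_PiE card_funcsetE PiE_eq_empty_iff)
  have "map_density V (insert a I) \<Phi> ^ (\<Prod>i\<in>insert a I. s i)
      = (map_density V (insert a I) \<Phi> ^ s a) ^ (\<Prod>i\<in>I. s i)"
    using insert.hyps by (simp add: power_mult)
  also have "\<dots> \<le> ((\<Sum>z\<in>Z. map_density V I (\<Psi> z)) / card Z) ^ (\<Prod>i\<in>I. s i)"
    using map_density_insert_power_le[OF insert.hyps assms(2,3)]
    unfolding Z(3) unfolding Z_def \<Psi>_def by (intro power_mono) (simp_all add: map_density_nonneg)
  also have "\<dots> \<le> (\<Sum>z\<in>Z. map_density V I (\<Psi> z) ^ (\<Prod>i\<in>I. s i)) / card Z"
    using Z by (intro power_mean_le_mean_power) (simp_all add: map_density_nonneg)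
  also have "\<dots> \<le> (\<Sum>z\<in>Z. blowup_density V I s (\<Psi> z)) / card Z"
    using insert by (intro divide_right_mono sum_mono) auto
  also have "\<dots> = blowup_density V (insert a I) s \<Phi>"
    using blowup_density_insert[OF insert.hyps assms(2)] unfolding Z(3) by (simp add: Z_def \<Psi>_def)
  finally show ?case .
qed

definition extensions ::
    "'b set \<Rightarrow> 'i set \<Rightarrow> ('i \<Rightarrow> nat) \<Rightarrow> (('i \<Rightarrow> 'b) \<Rightarrow> bool) \<Rightarrow> 'i \<Rightarrow> ('i \<Rightarrow> nat \<Rightarrow> 'b) \<Rightarrow> 'b set"
  where "extensions V I s \<Phi> k y = {w\<in>V. \<forall>g\<in>PiE I (\<lambda>i. {..<s i}). \<Phi> ((\<lambda>i\<in>I. y i (g i))(k := w))}"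

lemma blowup_density_insert_single:
  assumes "finite I" "k \<notin> I" "finite V"
  shows "blowup_density V (insert k I) (s(k := 1)) \<Phi>
    = (\<Sum>y\<in>PiE I (\<lambda>i. {..<s i} \<rightarrow>\<^sub>E V). real (card (extensions V I s \<Phi> k y)))
      / real (card V) ^ Suc (\<Sum>i\<in>I. s i)"
proof -
  have s: "blowup_density V I (s(k := 1)) \<Psi> = blowup_density V I s \<Psi>" for \<Psi>
    using assms(2) by (intro blowup_density_cong) auto
  have single: "(\<Sum>z\<in>{..<1::nat} \<rightarrow>\<^sub>E V. f (z 0)) = (\<Sum>w\<in>V. f w)" for f :: "'b \<Rightarrow> real"
    using prod_sum_PiE[of "{..<1::nat}" "\<lambda>_. V" "\<lambda>_. f"] assms(3) by simp
  have "blowup_density V (insert k I) (s(k := 1)) \<Phi>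
    = (\<Sum>z\<in>{..<1::nat} \<rightarrow>\<^sub>E V. blowup_density V I s (\<lambda>x. \<Phi> (x(k := z 0)))) / real (card V)"
    using blowup_density_insert[OF assms, of "s(k := 1)" \<Phi>] unfolding s by simp
  also have "\<dots> = (\<Sum>w\<in>V. blowup_density V I s (\<lambda>x. \<Phi> (x(k := w)))) / real (card V)"
    using single[of "\<lambda>w. blowup_density V I s (\<lambda>x. \<Phi> (x(k := w)))"] by simp
  also have "\<dots> = (\<Sum>y\<in>PiE I (\<lambda>i. {..<s i} \<rightarrow>\<^sub>E V). \<Sum>w\<in>V.
         of_bool (\<forall>g\<in>PiE I (\<lambda>i. {..<s i}). \<Phi> ((\<lambda>i\<in>I. y i (g i))(k := w))))
      / real (card V) ^ Suc (\<Sum>i\<in>I. s i)"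
    by (subst sum.swap) (simp add: blowup_density_def sum_divide_distrib[symmetric] mult.commute)
  finally show ?thesis
    using assms(3) by (simp add: extensions_def Int_def)
qed

lemma card_funcset_eq_pair_le:
  assumes "finite D" "finite V" "q \<in> D" "p \<noteq> q"
  shows "card {f \<in> D \<rightarrow>\<^sub>E V. f p = f q} \<le> card V ^ (card D - 1)"
proof -
  have "inj_on (\<lambda>f. f(q := undefined)) {f \<in> D \<rightarrow>\<^sub>E V. f p = f q}"
  proof (rule inj_onI)
    fix f g assume "f \<in> {f \<in> D \<rightarrow>\<^sub>E V. f p = f q}" "g \<in> {f \<in> D \<rightarrow>\<^sub>E V. f p = f q}"
      and eq: "f(q := undefined) = g(q := undefined)"
    then have "f q = g q"
      using assms(4) by (metis (mono_tags, lifting) fun_upd_other mem_Collect_eq)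
    then show "f = g"
      using eq by (metis fun_upd_idem_iff fun_upd_upd)
  qed
  moreover have "(\<lambda>f. f(q := undefined)) ` {f \<in> D \<rightarrow>\<^sub>E V. f p = f q} \<subseteq> D - {q} \<rightarrow>\<^sub>E V"
    by (force simp: PiE_def extensional_def Pi_def)
  ultimately have "card {f \<in> D \<rightarrow>\<^sub>E V. f p = f q} \<le> card (D - {q} \<rightarrow>\<^sub>E V)"
    using assms by (intro card_inj_on_le) (auto simp: finite_PiE)
  also have "\<dots> = card V ^ (card D - 1)"
    using assms by (simp add: card_funcsetE)
  finally show ?thesis .
qed

lemma card_not_inj_funcset_le:
  assumes "finite D" "finite V"
  shows "card {f \<in> D \<rightarrow>\<^sub>E V. \<not> inj_on f D} \<le> card D ^ 2 * card V ^ (card D - 1)"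
proof -
  have "{f \<in> D \<rightarrow>\<^sub>E V. \<not> inj_on f D} = (\<Union>p\<in>D. \<Union>q\<in>D - {p}. {f \<in> D \<rightarrow>\<^sub>E V. f p = f q})"
    by (auto simp: inj_on_def)
  also have "card \<dots> \<le> (\<Sum>p\<in>D. \<Sum>q\<in>D - {p}. card {f \<in> D \<rightarrow>\<^sub>E V. f p = f q})"
    using assms by (intro card_UN_le[THEN order_trans] sum_mono card_UN_le) auto
  also have "\<dots> \<le> (\<Sum>p\<in>D. \<Sum>q\<in>D. card V ^ (card D - 1))"
    using assms
    by (intro sum_mono order_trans[OF sum_mono sum_mono2[of D "D - _"]] card_funcset_eq_pair_le) auto
  finally show ?thesis
    by (simp add: power2_eq_square)
qed

lemma inj_on_uncurry_PiE:
  "inj_on (\<lambda>y. \<lambda>p\<in>Sigma J B. y (fst p) (snd p)) (PiE J (\<lambda>i. B i \<rightarrow>\<^sub>E V))"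
proof (rule inj_onI)
  fix y y' assume y: "y \<in> PiE J (\<lambda>i. B i \<rightarrow>\<^sub>E V)" and y': "y' \<in> PiE J (\<lambda>i. B i \<rightarrow>\<^sub>E V)"
    and eq: "(\<lambda>p\<in>Sigma J B. y (fst p) (snd p)) = (\<lambda>p\<in>Sigma J B. y' (fst p) (snd p))"
  have "y i j = y' i j" for i j
  proof (cases "i \<in> J \<and> j \<in> B i")
    case True
    then show ?thesis
      using fun_cong[OF eq, of "(i, j)"] by simp
  next
    case False
    then show ?thesis
      using y y' by (metis PiE_arb PiE_mem)
  qed
  then show "y = y'"
    by blast
qed

lemma card_not_inj_uncurry_le:
  assumes "finite J" "finite V" "\<And>i. i \<in> J \<Longrightarrow> finite (B i)"
  shows "card {y \<in> PiE J (\<lambda>i. B i \<rightarrow>\<^sub>E V). \<not> inj_on (\<lambda>(i, j). y i j) (Sigma J B)}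
    \<le> card (Sigma J B) ^ 2 * card V ^ (card (Sigma J B) - 1)"
proof -
  let ?uncurry = "\<lambda>y. \<lambda>p\<in>Sigma J B. y (fst p) (snd p)"
  have "card {y \<in> PiE J (\<lambda>i. B i \<rightarrow>\<^sub>E V). \<not> inj_on (\<lambda>(i, j). y i j) (Sigma J B)}
      \<le> card {f \<in> Sigma J B \<rightarrow>\<^sub>E V. \<not> inj_on f (Sigma J B)}"
  proof (rule card_inj_on_le)
    show "inj_on ?uncurry {y \<in> PiE J (\<lambda>i. B i \<rightarrow>\<^sub>E V). \<not> inj_on (\<lambda>(i, j). y i j) (Sigma J B)}"
      by (rule inj_on_subset[OF inj_on_uncurry_PiE]) blast
    show "?uncurry ` {y \<in> PiE J (\<lambda>i. B i \<rightarrow>\<^sub>E V). \<not> inj_on (\<lambda>(i, j). y i j) (Sigma J B)}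
        \<subseteq> {f \<in> Sigma J B \<rightarrow>\<^sub>E V. \<not> inj_on f (Sigma J B)}"
      by (auto simp: inj_on_def PiE_def Pi_def split_beta'; blast)
    show "finite {f \<in> Sigma J B \<rightarrow>\<^sub>E V. \<not> inj_on f (Sigma J B)}"
      using assms by (simp add: finite_PiE)
  qed
  also have "\<dots> \<le> card (Sigma J B) ^ 2 * card V ^ (card (Sigma J B) - 1)"
    using assms by (intro card_not_inj_funcset_le) auto
  finally show ?thesis .
qed

lemma sub_hg_blowupI:
  assumes "inj_on f (blowup_V m s)" "f ` blowup_V m s \<subseteq> V"
    and "\<And>F g. F \<in> EH \<Longrightarrow> \<forall>i\<in>F. g i < s i \<Longrightarrow> (\<lambda>i. f (i, g i)) ` F \<in> E"
  shows "sub_hg (blowup_V m s) (blowup_E EH s) V E"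
  unfolding sub_hg_def blowup_E_def using assms by (auto simp: image_image)

lemma sub_hg_blowup_of_extensions:
  fixes m k :: nat and y :: "nat \<Rightarrow> nat \<Rightarrow> 'b" and EH :: "nat set set" and E :: "'b set set"
  defines "J \<equiv> {0..<m} - {k}"
  defines "\<Phi> \<equiv> \<lambda>x. \<forall>F\<in>EH. x ` F \<in> E"
  assumes "EH \<subseteq> Pow {0..<m}" "\<forall>i<m. 0 < s i" "k < m"
    and y: "y \<in> PiE J (\<lambda>i. {..<s i} \<rightarrow>\<^sub>E V)"
    and y_inj: "inj_on (\<lambda>(i, j). y i j) (SIGMA i:J. {..<s i})"
    and v: "inj_on v {..<s k}" "\<And>j. j < s k \<Longrightarrow> v j \<in> extensions V J s \<Phi> k y"
    and v_y: "\<And>i j j'. j < s k \<Longrightarrow> i \<in> J \<Longrightarrow> j' < s i \<Longrightarrow> v j \<noteq> y i j'"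
  shows "sub_hg (blowup_V m s) (blowup_E EH s) V E"
proof (rule sub_hg_blowupI)
  define f where "f = (\<lambda>(i, j). if i = k then v j else y i j)"
  have J_iff: "i \<in> J \<longleftrightarrow> i < m \<and> i \<noteq> k" for i
    by (auto simp: J_def)
  have y_V: "y i j \<in> V" if "i \<in> J" "j < s i" for i j
    using y that by (meson PiE_mem lessThan_iff)
  show "inj_on f (blowup_V m s)"
  proof (rule inj_onI, clarify)
    fix i j i' j' assume "(i, j) \<in> blowup_V m s" "(i', j') \<in> blowup_V m s"
      and eq: "f (i, j) = f (i', j')"
    then have ij: "i < m" "j < s i" "i' < m" "j' < s i'"
      by (auto simp: blowup_V_def)
    then show "i = i' \<and> j = j'"
      using eq v(1) v_y[of j i' j'] v_y[of j' i j] inj_onD[OF y_inj, of "(i, j)" "(i', j')"]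
      by (cases "i = k"; cases "i' = k") (auto simp: f_def J_iff inj_on_def)
  qed
  show "f ` blowup_V m s \<subseteq> V"
    using v(2) y_V by (fastforce simp: blowup_V_def f_def J_iff extensions_def)
  fix F g assume F: "F \<in> EH" "\<forall>i\<in>F. g i < s i"
  define w where "w = v (if k \<in> F then g k else 0)"
  define g' where "g' = (\<lambda>i\<in>J. if i \<in> F then g i else 0)"
  have "w \<in> extensions V J s \<Phi> k y"
    using F(2) assms(4,5) v(2) by (auto simp: w_def)
  moreover have "g' \<in> PiE J (\<lambda>i. {..<s i})"
    using F(2) assms(4) by (auto simp: g'_def J_iff)
  ultimately have "((\<lambda>i\<in>J. y i (g' i))(k := w)) ` F \<in> E"
    using F(1) by (auto simp: extensions_def \<Phi>_def)
  moreover have "F \<subseteq> {0..<m}"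
    using F(1) assms(3) by auto
  then have "((\<lambda>i\<in>J. y i (g' i))(k := w)) ` F = (\<lambda>i. f (i, g i)) ` F"
    by (intro image_cong refl) (auto simp: f_def g'_def w_def J_iff)
  ultimately show "(\<lambda>i. f (i, g i)) ` F \<in> E"
    by simp
qed

lemma card_extensions_lt:
  fixes m k :: nat and y :: "nat \<Rightarrow> nat \<Rightarrow> 'b"
  defines "J \<equiv> {0..<m} - {k}"
  assumes "finite V" "EH \<subseteq> Pow {0..<m}" "\<forall>i<m. 0 < s i" "k < m"
    and "\<not> sub_hg (blowup_V m s) (blowup_E EH s) V E"
    and "y \<in> PiE J (\<lambda>i. {..<s i} \<rightarrow>\<^sub>E V)"
    and "inj_on (\<lambda>(i, j). y i j) (SIGMA i:J. {..<s i})"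
  shows "card (extensions V J s (\<lambda>x. \<forall>F\<in>EH. x ` F \<in> E) k y) < s k + (\<Sum>i\<in>J. s i)"
proof (rule ccontr)
  define W where "W = extensions V J s (\<lambda>x. \<forall>F\<in>EH. x ` F \<in> E) k y"
  define Y where "Y = (\<lambda>(i, j). y i j) ` (SIGMA i:J. {..<s i})"
  assume "\<not> card W < s k + (\<Sum>i\<in>J. s i)"
  moreover have "card Y \<le> (\<Sum>i\<in>J. s i)"
    using card_image_le[of "SIGMA i:J. {..<s i}" "\<lambda>(i, j). y i j"] by (simp add: Y_def J_def)
  moreover have "finite Y"
    by (simp add: Y_def J_def)
  ultimately have "s k \<le> card (W - Y)"
    using diff_card_le_card_Diff[of Y W] by linarith
  then obtain S where S: "S \<subseteq> W - Y" "card S = s k"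
    by (meson obtain_subset_with_card_n)
  moreover have "finite S"
    using S(1) assms(2) by (auto simp: W_def extensions_def intro: finite_subset)
  ultimately obtain v where v: "bij_betw v {..<s k} S"
    using ex_bij_betw_nat_finite[of S] by (auto simp: atLeast0LessThan)
  have v_S: "j < s k \<Longrightarrow> v j \<in> S" for j
    using bij_betwE[OF v] by simp
  have "y i j' \<in> Y" if "i \<in> J" "j' < s i" for i j'
    unfolding Y_def using that by (intro image_eqI[of _ _ "(i, j')"]) auto
  then have v_y: "v j \<noteq> y i j'" if "j < s k" "i \<in> J" "j' < s i" for i j j'
    using v_S[OF that(1)] that(2,3) S(1) by (metis Diff_iff subsetD)
  have "sub_hg (blowup_V m s) (blowup_E EH s) V E"
    using S(1) v_S v_y bij_betw_imp_inj_on[OF v]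
    by (intro sub_hg_blowup_of_extensions[OF assms(3-5)]) (use assms(7,8) in \<open>auto simp: W_def J_def\<close>)
  with assms(6) show False
    by blast
qed

lemma sum_card_extensions_le:
  fixes m k :: nat and s :: "nat \<Rightarrow> nat"
  defines "J \<equiv> {0..<m} - {k}"
  defines "L \<equiv> \<Sum>i\<in>J. s i"
  assumes V: "finite V"
    and "EH \<subseteq> Pow {0..<m}" "\<forall>i<m. 0 < s i" "k < m"
    and "\<not> sub_hg (blowup_V m s) (blowup_E EH s) V E"
  shows "(\<Sum>y\<in>PiE J (\<lambda>i. {..<s i} \<rightarrow>\<^sub>E V). real (card (extensions V J s (\<lambda>x. \<forall>F\<in>EH. x ` F \<in> E) k y)))
    \<le> real (s k + L + L ^ 2) * real (card V) ^ L"
proof -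
  define n where "n = card V"
  define P where "P = PiE J (\<lambda>i. {..<s i} \<rightarrow>\<^sub>E V)"
  define Bad where "Bad = {y \<in> P. \<not> inj_on (\<lambda>(i, j). y i j) (SIGMA i:J. {..<s i})}"
  define c where "c y = card (extensions V J s (\<lambda>x. \<forall>F\<in>EH. x ` F \<in> E) k y)" for y
  have P: "finite P" "card P = n ^ L"
    using V by (simp_all add: P_def J_def finite_PiE card_PiE card_funcsetE n_def L_def power_sum)
  have "card (SIGMA i:J. {..<s i}) = L"
    by (simp add: L_def J_def)
  then have "card Bad \<le> L ^ 2 * n ^ (L - 1)"
    using card_not_inj_uncurry_le[OF _ V, of J "\<lambda>i. {..<s i}"] by (simp add: Bad_def P_def n_def J_def)
  then have "real (card Bad) * n \<le> real (L ^ 2 * n ^ (L - 1)) * n"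
    by (intro mult_right_mono) (simp_all only: of_nat_le_iff of_nat_0_le_iff)
  also have "\<dots> \<le> real (L ^ 2) * n ^ L"
    by (cases L) simp_all
  finally have Bad: "real (card Bad) * n \<le> real (L ^ 2) * n ^ L" .
  have c_le_n: "c y \<le> n" for y
    unfolding c_def n_def extensions_def using V by (intro card_mono) auto
  have c_good: "c y \<le> s k + L" if "y \<in> P - Bad" for y
    using card_extensions_lt[OF V assms(4-7), of y] that
    by (simp add: c_def Bad_def P_def J_def L_def)
  have "(\<Sum>y\<in>P. real (c y)) = (\<Sum>y\<in>P - Bad. real (c y)) + (\<Sum>y\<in>Bad. real (c y))"
    using P(1) by (intro sum.subset_diff) (auto simp: Bad_def)
  also have "\<dots> \<le> (\<Sum>y\<in>P - Bad. real (s k + L)) + (\<Sum>y\<in>Bad. real n)"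
    using c_good c_le_n by (intro add_mono sum_mono) (simp_all only: of_nat_le_iff)
  also have "\<dots> \<le> real (card P) * real (s k + L) + real (L ^ 2) * n ^ L"
  proof (rule add_mono)
    have "card (P - Bad) \<le> card P"
      using P(1) by (intro card_mono) auto
    then show "(\<Sum>y\<in>P - Bad. real (s k + L)) \<le> real (card P) * real (s k + L)"
      by (simp add: mult_right_mono)
  qed (use Bad in simp)
  also have "\<dots> = real (s k + L + L ^ 2) * n ^ L"
    by (simp add: P(2) algebra_simps)
  finally show ?thesis
    by (simp add: c_def P_def n_def)
qed

lemma blowup_density_single_part_le:
  fixes m k :: nat and s :: "nat \<Rightarrow> nat"
  defines "J \<equiv> {0..<m} - {k}"
  defines "L \<equiv> \<Sum>i\<in>J. s i"
  assumes V: "finite V" "V \<noteq> {}"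
    and "EH \<subseteq> Pow {0..<m}" "\<forall>i<m. 0 < s i" "k < m"
    and "\<not> sub_hg (blowup_V m s) (blowup_E EH s) V E"
  shows "blowup_density V {0..<m} (s(k := 1)) (\<lambda>x. \<forall>F\<in>EH. x ` F \<in> E)
    \<le> real (s k + L + L ^ 2) / real (card V)"
proof -
  have J: "finite J" "k \<notin> J" "{0..<m} = insert k J"
    using assms(7) by (auto simp: J_def)
  have "blowup_density V {0..<m} (s(k := 1)) (\<lambda>x. \<forall>F\<in>EH. x ` F \<in> E)
      = (\<Sum>y\<in>PiE J (\<lambda>i. {..<s i} \<rightarrow>\<^sub>E V).
          real (card (extensions V J s (\<lambda>x. \<forall>F\<in>EH. x ` F \<in> E) k y))) / real (card V) ^ Suc L"
    unfolding J(3) L_def by (rule blowup_density_insert_single[OF J(1,2) V(1)])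
  also have "\<dots> \<le> real (s k + L + L ^ 2) * real (card V) ^ L / real (card V) ^ Suc L"
    using sum_card_extensions_le[OF V(1) assms(5-8)] unfolding J_def L_def
    by (rule divide_right_mono) simp
  also have "\<dots> = real (s k + L + L ^ 2) / real (card V)"
    using V by (simp add: card_gt_0_iff)
  finally show ?thesis .
qed

lemma card_inj_maps_ge:
  assumes "finite V1" "finite V" "2 * card V1 \<le> card V"
  shows "(real (card V) / 2) ^ card V1 \<le> real (card (inj_maps V1 V))"
proof -
  have "real (card V) / 2 \<le> real (card V - card V1)"
    using assms(3) by simp
  then have "(real (card V) / 2) ^ card V1 \<le> real ((card V - card V1) ^ card V1)"
    by (simp add: power_mono)
  also have "(card V - card V1) ^ card V1 \<le> (\<Prod>i\<in>{0..<card V1}. card V - i)"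
    using prod_mono[of "{0..<card V1}" "\<lambda>_. card V - card V1" "\<lambda>i. card V - i"] by simp
  also have "\<dots> = card (inj_maps V1 V)"
    using card_inj_on_subset_funcset[OF assms(1,2) order_refl] by (simp add: inj_maps_def)
  finally show ?thesis
    by simp
qed

lemma hg_density_le_map_density:
  assumes "finite V1" "finite V" "2 * card V1 \<le> card V"
  shows "hg_density V1 E1 V E \<le> 2 ^ card V1 * map_density V V1 (\<lambda>x. \<forall>F\<in>E1. x ` F \<in> E)"
proof -
  define hom where "hom = {x \<in> V1 \<rightarrow>\<^sub>E V. \<forall>F\<in>E1. x ` F \<in> E}"
  have "card {f \<in> inj_maps V1 V. \<forall>F\<in>E1. f ` F \<in> E} \<le> card hom"
    using assms(1,2) by (intro card_mono) (auto simp: hom_def inj_maps_def finite_PiE)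
  moreover have "card V1 = 0 \<or> 0 < card V"
    using assms(3) by linarith
  then have "0 < (real (card V) / 2) ^ card V1"
    by auto
  ultimately have "hg_density V1 E1 V E \<le> real (card hom) / (real (card V) / 2) ^ card V1"
    unfolding hg_density_def by (intro frac_le card_inj_maps_ge assms) simp_all
  also have "\<dots> = 2 ^ card V1 * map_density V V1 (\<lambda>x. \<forall>F\<in>E1. x ` F \<in> E)"
    using assms(1,2) by (simp add: map_density_def hom_def power_divide Int_def finite_PiE)
  finally show ?thesis .
qed

lemma le_powr_of_power_le_divide:
  fixes t K n :: real
  assumes "0 \<le> t" "0 < p" "t ^ p \<le> K / n" "0 < n"
  shows "t \<le> K powr (1 / p) * n powr (- (1 / p))"
proof (cases "t = 0")
  case False
  then have "t = (t ^ p) powr (1 / p)"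
    using assms(1,2) by (simp add: powr_realpow[symmetric] powr_powr)
  also have "\<dots> \<le> (K / n) powr (1 / p)"
    using assms by (intro powr_mono2) auto
  also have "\<dots> = K powr (1 / p) * n powr (- (1 / p))"
    using assms order_trans[OF zero_le_power assms(3)]
    by (simp add: powr_divide powr_minus_divide zero_le_divide_iff)
  finally show ?thesis .
qed (use assms in simp)

lemma prod_fun_upd_one:
  assumes "finite A" "k \<in> A"
  shows "(\<Prod>i\<in>A. f i) = f k * (\<Prod>i\<in>A. (f(k := 1)) i)"
proof -
  have "(\<Prod>i\<in>A - {k}. (f(k := 1)) i) = (\<Prod>i\<in>A - {k}. f i)"
    by (rule prod.cong) auto
  then show ?thesis
    using prod.remove[OF assms, of f] prod.remove[OF assms, of "f(k := 1)"] by simp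
qed

lemma hg_density_le_if_blowup_free:
  fixes m k :: nat and s :: "nat \<Rightarrow> nat"
  defines "L \<equiv> \<Sum>i\<in>{0..<m} - {k}. s i"
  defines "P \<equiv> \<Prod>i\<in>{0..<m}. (s(k := 1)) i"
  assumes "EH \<subseteq> Pow {0..<m}" "\<forall>i<m. 0 < s i" "k < m"
    and "finite V" "2 * m < card V"
    and "\<not> sub_hg (blowup_V m s) (blowup_E EH s) V E"
  shows "hg_density {0..<m} EH V E
    \<le> 2 ^ m * real (s k + L + L ^ 2) powr (1 / P) * real (card V) powr (- (1 / P))"
proof -
  define t where "t = map_density V {0..<m} (\<lambda>x. \<forall>F\<in>EH. x ` F \<in> E)"
  have V: "finite V" "V \<noteq> {}"
    using assms(6,7) by auto
  have "t ^ P \<le> blowup_density V {0..<m} (s(k := 1)) (\<lambda>x. \<forall>F\<in>EH. x ` F \<in> E)"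
    unfolding t_def P_def using V assms(4) by (intro map_density_power_le_blowup_density) auto
  also have "\<dots> \<le> real (s k + L + L ^ 2) / real (card V)"
    unfolding L_def using blowup_density_single_part_le[OF V assms(3-5,8)] .
  finally have "t \<le> real (s k + L + L ^ 2) powr (1 / P) * real (card V) powr (- (1 / P))"
    using assms(4,7) by (intro le_powr_of_power_le_divide) (auto simp: t_def P_def map_density_nonneg)
  then have "2 ^ m * t \<le> 2 ^ m * (real (s k + L + L ^ 2) powr (1 / P) * real (card V) powr (- (1 / P)))"
    by (rule mult_left_mono) simp
  moreover have "hg_density {0..<m} EH V E \<le> 2 ^ m * t"
    using hg_density_le_map_density[of "{0..<m}" V] assms(6,7) by (simp add: t_def)
  ultimately show ?thesis
    unfolding mult.assoc by linarith
qed

theorem mainTheorem16: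
  fixes m :: nat and EH :: "nat set set" and s :: "nat \<Rightarrow> nat"
  assumes "0 < m"
    and "is_hypergraph {0..<m} EH"
    and "\<forall>i<m. 0 < s i"
  shows "\<exists>C n0. \<forall>n \<ge> n0. \<forall>(V :: nat set) E.
           is_hypergraph V E \<and> card V = n \<and> edge_sizes E = edge_sizes EH \<and>
           \<not> sub_hg (blowup_V m s) (blowup_E EH s) V E
           \<longrightarrow> hg_density {0..<m} EH V E
                 \<le> C * real n powr (- (real (Max (s ` {0..<m})) / real (\<Prod>i<m. s i)))"
proof -
  have EH: "EH \<subseteq> Pow {0..<m}"
    using assms(2) by (simp add: is_hypergraph_def)
  have "Max (s ` {0..<m}) \<in> s ` {0..<m}"
    using assms(1) by (intro Max_in) auto
  then obtain k where k: "k < m" "s k = Max (s ` {0..<m})"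
    by auto
  define P where "P = (\<Prod>i\<in>{0..<m}. (s(k := 1)) i)"
  have "(\<Prod>i<m. s i) = s k * P" "0 < s k"
    using prod_fun_upd_one[of "{0..<m}" k s] k(1) assms(3) by (simp_all add: P_def atLeast0LessThan)
  then have expo: "real (Max (s ` {0..<m})) / real (\<Prod>i<m. s i) = 1 / real P"
    by (simp add: k(2)[symmetric])
  define K where "K = real (s k + (\<Sum>i\<in>{0..<m} - {k}. s i) + (\<Sum>i\<in>{0..<m} - {k}. s i) ^ 2)"
  show ?thesis
    unfolding expo using hg_density_le_if_blowup_free[OF EH assms(3) k(1), folded P_def K_def]
    by (intro exI[of _ "2 ^ m * K powr (1 / P)"] exI[of _ "2 * m + 1"]) (auto simp: is_hypergraph_def Suc_le_eq)
qed

end
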